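(* Let $Z\in\{0,1\}$ and $S(1),S(0)\in\{0,1\}$ be random variables with $Z\perp\!\!\!\perp \{S(1),S(0),\mathbf{X}\}$, where $\mathbf{X}$ is a covariate vector, and let $S=S(Z)$. Let $p_1=\Pr(S=1\mid Z=1)$ and $p_0=\Pr(S=1\mid Z=0)$, and assume $p_1\ge p_0$. Suppose there is a constant $\xi$ with $0\le \xi<1$ such that $\xi = \Pr(U=\bar{s}s\mid\mathbf{X})/\Pr(U=s\bar{s}\mid\mathbf{X})$. Then $$\pi_{s\bar{s}} = \frac{p_1-p_0}{1-\xi},\quad \pi_{\bar{s}\bar{s}} = 1-p_0-\frac{p_1-p_0}{1-\xi},\quad \pi_{ss} = p_1 - \frac{p_1-p_0}{1-\xi},\quad \pi_{\bar{s}s} = \frac{\xi(p_1-p_0)}{1-\xi},$$ and consequently $$0\le \xi\le 1-\frac{p_1-p_0}{\min(p_1,1-p_0)}\le 1.$$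
   Context: The principal stratum is $U=(S(1),S(0))$, whose values $(1,1),(1,0),(0,1),(0,0)$ are labelled $ss, s\bar{s}, \bar{s}s, \bar{s}\bar{s}$; $\pi_u=\Pr(U=u)$. No monotonicity assumption is made. Conditioning events and denominators (including $\Pr(U=s\bar{s}\mid\mathbf{X})$ and $\min(p_1,1-p_0)$) are assumed positive. *)

theory Defs
  imports "HOL-Probability.Probability"
begin

text \<open>Binary variables are encoded as bool (True = 1, False = 0).
  The principal stratum U = (S(1), S(0)); the event U = (a,b).\<close>
definition stratum_event :: "'a measure \<Rightarrow> ('a \<Rightarrow> bool) \<Rightarrow> ('a \<Rightarrow> bool) \<Rightarrow> bool \<Rightarrow> bool \<Rightarrow> 'a set" where
  "stratum_event M S1 S0 a b = {\<omega> \<in> space M. S1 \<omega> = a \<and> S0 \<omega> = b}"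

definition pi_U :: "'a measure \<Rightarrow> ('a \<Rightarrow> bool) \<Rightarrow> ('a \<Rightarrow> bool) \<Rightarrow> bool \<Rightarrow> bool \<Rightarrow> real" where
  "pi_U M S1 S0 a b = measure M (stratum_event M S1 S0 a b)"

definition cond_pi_U :: "'a measure \<Rightarrow> ('a \<Rightarrow> 'b) \<Rightarrow> 'b measure \<Rightarrow> ('a \<Rightarrow> bool) \<Rightarrow> ('a \<Rightarrow> bool) \<Rightarrow> bool \<Rightarrow> bool \<Rightarrow> 'a \<Rightarrow> real" where
  "cond_pi_U M X N S1 S0 a b = real_cond_exp M (vimage_algebra (space M) X N) (indicator (stratum_event M S1 S0 a b))"

definition obs_S :: "('a \<Rightarrow> bool) \<Rightarrow> ('a \<Rightarrow> bool) \<Rightarrow> ('a \<Rightarrow> bool) \<Rightarrow> 'a \<Rightarrow> bool" where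
  "obs_S Z S1 S0 = (\<lambda>\<omega>. if Z \<omega> then S1 \<omega> else S0 \<omega>)"

definition p_obs :: "'a measure \<Rightarrow> ('a \<Rightarrow> bool) \<Rightarrow> ('a \<Rightarrow> bool) \<Rightarrow> ('a \<Rightarrow> bool) \<Rightarrow> bool \<Rightarrow> real" where
  "p_obs M Z S1 S0 z =
     measure M {\<omega> \<in> space M. obs_S Z S1 S0 \<omega> \<and> Z \<omega> = z} / measure M {\<omega> \<in> space M. Z \<omega> = z}"

end

theory Submission
  imports Defs
begin

text \<open>Write \<pi>(a,b) for Pr(S(1) = a, S(0) = b). Randomisation of Z makes p1 and p0 the
  marginals Pr(S(1)) = \<pi>(1,1) + \<pi>(1,0) and Pr(S(0)) = \<pi>(1,1) + \<pi>(0,1). Integrating the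
  conditional identity Pr(U = (0,1) | X) = \<xi> Pr(U = (1,0) | X) gives \<pi>(0,1) = \<xi> \<pi>(1,0), so
  p1 - p0 = (1 - \<xi>) \<pi>(1,0) identifies all four strata. The bound on \<xi> is
  \<pi>(1,0) \<le> min p1 (1 - p0), which holds because \<pi>(1,1) and \<pi>(0,0) are nonnegative.\<close>

lemma stratum_event_sets [measurable]:
  assumes [measurable]: "S1 \<in> measurable M (count_space UNIV)" "S0 \<in> measurable M (count_space UNIV)"
  shows "stratum_event M S1 S0 a b \<in> sets M"
  unfolding stratum_event_def by measurable

lemma (in prob_space) integral_cond_pi_U:
  assumes [measurable]: "X \<in> measurable M N"
    "S1 \<in> measurable M (count_space UNIV)" "S0 \<in> measurable M (count_space UNIV)"
  shows "(\<integral>\<omega>. cond_pi_U M X N S1 S0 a b \<omega> \<partial>M) = pi_U M S1 S0 a b"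
proof -
  have "X \<in> space M \<rightarrow> space N"
    using measurable_space[OF assms(1)] by blast
  then have "subalgebra M (vimage_algebra (space M) X N)"
    unfolding subalgebra_def
    by (auto simp: sets_vimage_algebra2 space_vimage_algebra intro: measurable_sets)
  then interpret sigma_finite_subalgebra M "vimage_algebra (space M) X N"
    by (intro finite_measure_subalgebra_is_sigma_finite)
       (simp add: finite_measure_subalgebra_def finite_measure_subalgebra_axioms_def
         finite_measure_axioms)
  have "integrable M (indicator (stratum_event M S1 S0 a b) :: 'a \<Rightarrow> real)"
    by (intro integrable_real_indicator) (simp_all add: emeasure_eq_measure)
  then show ?thesis
    unfolding cond_pi_U_def pi_U_def by (simp add: real_cond_exp_int(2))
qed

lemma (in prob_space) pi_U_ratio_if_cond_pi_U_ratio: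
  assumes [measurable]: "X \<in> measurable M N"
    "S1 \<in> measurable M (count_space UNIV)" "S0 \<in> measurable M (count_space UNIV)"
    and pos: "AE \<omega> in M. cond_pi_U M X N S1 S0 a b \<omega> > 0"
    and ratio: "AE \<omega> in M. \<xi> = cond_pi_U M X N S1 S0 c d \<omega> / cond_pi_U M X N S1 S0 a b \<omega>"
  shows "pi_U M S1 S0 c d = \<xi> * pi_U M S1 S0 a b"
proof -
  have "AE \<omega> in M. cond_pi_U M X N S1 S0 c d \<omega> = \<xi> * cond_pi_U M X N S1 S0 a b \<omega>"
    using pos ratio by eventually_elim auto
  then have "(\<integral>\<omega>. cond_pi_U M X N S1 S0 c d \<omega> \<partial>M) = (\<integral>\<omega>. \<xi> * cond_pi_U M X N S1 S0 a b \<omega> \<partial>M)"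
    by (intro integral_cong_AE) (auto simp: cond_pi_U_def)
  then show ?thesis
    by (simp add: integral_cond_pi_U)
qed

lemma p_obs_eq_marginal:
  assumes indep: "measure M {\<omega> \<in> space M. Z \<omega> = z \<and> (if z then S1 \<omega> else S0 \<omega>)}
      = measure M {\<omega> \<in> space M. Z \<omega> = z} * measure M {\<omega> \<in> space M. if z then S1 \<omega> else S0 \<omega>}"
    and pos: "measure M {\<omega> \<in> space M. Z \<omega> = z} > 0"
  shows "p_obs M Z S1 S0 z = measure M {\<omega> \<in> space M. if z then S1 \<omega> else S0 \<omega>}"
proof -
  have "{\<omega> \<in> space M. obs_S Z S1 S0 \<omega> \<and> Z \<omega> = z}
      = {\<omega> \<in> space M. Z \<omega> = z \<and> (if z then S1 \<omega> else S0 \<omega>)}"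
    by (auto simp: obs_S_def)
  then show ?thesis
    using indep pos by (simp add: p_obs_def)
qed

lemma (in prob_space) p_obs_eq_prob_potential_outcome:
  assumes X: "X \<in> measurable M N"
    and indep: "\<And>z A. A \<in> sets (count_space UNIV \<Otimes>\<^sub>M count_space UNIV \<Otimes>\<^sub>M N) \<Longrightarrow>
           prob {\<omega> \<in> space M. Z \<omega> = z \<and> (S1 \<omega>, S0 \<omega>, X \<omega>) \<in> A}
         = prob {\<omega> \<in> space M. Z \<omega> = z} * prob {\<omega> \<in> space M. (S1 \<omega>, S0 \<omega>, X \<omega>) \<in> A}"
    and pos: "prob {\<omega> \<in> space M. Z \<omega> = z} > 0"
  shows "p_obs M Z S1 S0 z = prob {\<omega> \<in> space M. if z then S1 \<omega> else S0 \<omega>}"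
proof (rule p_obs_eq_marginal[OF _ pos])
  let ?A = "if z then {True} \<times> UNIV \<times> space N else UNIV \<times> {True} \<times> space N"
  have A_sets: "?A \<in> sets (count_space UNIV \<Otimes>\<^sub>M count_space UNIV \<Otimes>\<^sub>M N)"
    by (cases z) (auto intro!: pair_measureI)
  have X_space: "X \<omega> \<in> space N" if "\<omega> \<in> space M" for \<omega>
    using measurable_space[OF X that] .
  have marginal_event: "{\<omega> \<in> space M. (S1 \<omega>, S0 \<omega>, X \<omega>) \<in> ?A}
      = {\<omega> \<in> space M. if z then S1 \<omega> else S0 \<omega>}"
    using X_space by auto
  have joint_event: "{\<omega> \<in> space M. Z \<omega> = z \<and> (S1 \<omega>, S0 \<omega>, X \<omega>) \<in> ?A}
      = {\<omega> \<in> space M. Z \<omega> = z \<and> (if z then S1 \<omega> else S0 \<omega>)}"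
    using X_space by auto
  show "prob {\<omega> \<in> space M. Z \<omega> = z \<and> (if z then S1 \<omega> else S0 \<omega>)}
      = prob {\<omega> \<in> space M. Z \<omega> = z} * prob {\<omega> \<in> space M. if z then S1 \<omega> else S0 \<omega>}"
    using indep[OF A_sets, of z] unfolding marginal_event joint_event .
qed

lemma (in prob_space) prob_S1_eq_sum_pi_U:
  assumes [measurable]: "S1 \<in> measurable M (count_space UNIV)" "S0 \<in> measurable M (count_space UNIV)"
  shows "prob {\<omega> \<in> space M. S1 \<omega> = a} = pi_U M S1 S0 a True + pi_U M S1 S0 a False"
proof -
  have "{\<omega> \<in> space M. S1 \<omega> = a} = stratum_event M S1 S0 a True \<union> stratum_event M S1 S0 a False"
    by (auto simp: stratum_event_def)
  moreover have "stratum_event M S1 S0 a True \<inter> stratum_event M S1 S0 a False = {}"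
    by (auto simp: stratum_event_def)
  ultimately show ?thesis
    by (simp add: pi_U_def finite_measure_Union)
qed

lemma (in prob_space) prob_S0_eq_sum_pi_U:
  assumes [measurable]: "S1 \<in> measurable M (count_space UNIV)" "S0 \<in> measurable M (count_space UNIV)"
  shows "prob {\<omega> \<in> space M. S0 \<omega> = b} = pi_U M S1 S0 True b + pi_U M S1 S0 False b"
proof -
  have "pi_U M S1 S0 a b = pi_U M S0 S1 b a" for a b
    by (auto simp: pi_U_def stratum_event_def intro: arg_cong[where f = "measure M"])
  then show ?thesis
    using prob_S1_eq_sum_pi_U[OF assms(2,1)] by simp
qed

lemma (in prob_space) sum_pi_U_eq_1:
  assumes [measurable]: "S1 \<in> measurable M (count_space UNIV)" "S0 \<in> measurable M (count_space UNIV)"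
  shows "pi_U M S1 S0 True True + pi_U M S1 S0 True False
       + pi_U M S1 S0 False True + pi_U M S1 S0 False False = 1"
proof -
  have "space M - {\<omega> \<in> space M. S1 \<omega>} = {\<omega> \<in> space M. S1 \<omega> = False}"
    by auto
  then have "prob {\<omega> \<in> space M. S1 \<omega> = True} + prob {\<omega> \<in> space M. S1 \<omega> = False} = 1"
    using prob_compl[of "{\<omega> \<in> space M. S1 \<omega>}"] by simp
  then show ?thesis
    unfolding prob_S1_eq_sum_pi_U[OF assms] by simp
qed

lemma strata_identified:
  fixes ss sn ns nn p1 p0 \<xi> :: real
  assumes "ss \<ge> 0" "nn \<ge> 0" "ss + sn + ns + nn = 1"
    and p1: "p1 = ss + sn" and p0: "p0 = ss + ns"
    and ratio: "ns = \<xi> * sn" and "\<xi> < 1" and "min p1 (1 - p0) > 0"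
  shows "sn = (p1 - p0) / (1 - \<xi>)" "nn = 1 - p0 - (p1 - p0) / (1 - \<xi>)"
    "ss = p1 - (p1 - p0) / (1 - \<xi>)" "ns = \<xi> * (p1 - p0) / (1 - \<xi>)"
    "\<xi> \<le> 1 - (p1 - p0) / min p1 (1 - p0)"
proof -
  have diff: "p1 - p0 = (1 - \<xi>) * sn"
    using p1 p0 ratio by (simp add: algebra_simps)
  then show sn: "sn = (p1 - p0) / (1 - \<xi>)"
    using \<open>\<xi> < 1\<close> by simp
  then show "nn = 1 - p0 - (p1 - p0) / (1 - \<xi>)" "ss = p1 - (p1 - p0) / (1 - \<xi>)"
    using assms by simp_all
  show "ns = \<xi> * (p1 - p0) / (1 - \<xi>)"
    using ratio sn by simp
  have "sn \<le> min p1 (1 - p0)"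
    using assms by simp
  then have "(1 - \<xi>) * (sn / min p1 (1 - p0)) \<le> (1 - \<xi>) * 1"
    using assms by (intro mult_left_mono) auto
  then show "\<xi> \<le> 1 - (p1 - p0) / min p1 (1 - p0)"
    using diff by simp
qed

theorem proposition5:
  fixes M :: "'a measure" and Z S1 S0 :: "'a \<Rightarrow> bool"
    and X :: "'a \<Rightarrow> 'b" and N :: "'b measure" and \<xi> :: real
  assumes "prob_space M"
    and "Z \<in> measurable M (count_space UNIV)"
    and "S1 \<in> measurable M (count_space UNIV)"
    and "S0 \<in> measurable M (count_space UNIV)"
    and "X \<in> measurable M N"
    and indep: "\<And>z A. A \<in> sets (count_space UNIV \<Otimes>\<^sub>M count_space UNIV \<Otimes>\<^sub>M N) \<Longrightarrow>
           measure M {\<omega> \<in> space M. Z \<omega> = z \<and> (S1 \<omega>, S0 \<omega>, X \<omega>) \<in> A}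
         = measure M {\<omega> \<in> space M. Z \<omega> = z} * measure M {\<omega> \<in> space M. (S1 \<omega>, S0 \<omega>, X \<omega>) \<in> A}"
    and "measure M {\<omega> \<in> space M. Z \<omega>} > 0"
    and "measure M {\<omega> \<in> space M. \<not> Z \<omega>} > 0"
    and "p_obs M Z S1 S0 True \<ge> p_obs M Z S1 S0 False"
    and "0 \<le> \<xi>" and "\<xi> < 1"
    and "AE \<omega> in M. cond_pi_U M X N S1 S0 True False \<omega> > 0"
    and "AE \<omega> in M. \<xi> = cond_pi_U M X N S1 S0 False True \<omega> / cond_pi_U M X N S1 S0 True False \<omega>"
    and "min (p_obs M Z S1 S0 True) (1 - p_obs M Z S1 S0 False) > 0"
  shows "let p1 = p_obs M Z S1 S0 True; p0 = p_obs M Z S1 S0 False in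
           pi_U M S1 S0 True False = (p1 - p0) / (1 - \<xi>) \<and>
           pi_U M S1 S0 False False = 1 - p0 - (p1 - p0) / (1 - \<xi>) \<and>
           pi_U M S1 S0 True True = p1 - (p1 - p0) / (1 - \<xi>) \<and>
           pi_U M S1 S0 False True = \<xi> * (p1 - p0) / (1 - \<xi>) \<and>
           0 \<le> \<xi> \<and> \<xi> \<le> 1 - (p1 - p0) / min p1 (1 - p0) \<and>
           1 - (p1 - p0) / min p1 (1 - p0) \<le> 1"
proof -
  interpret prob_space M by fact
  note [measurable] = assms(2-5)
  have "p_obs M Z S1 S0 z = prob {\<omega> \<in> space M. if z then S1 \<omega> else S0 \<omega>}" for z
    using assms(7,8) by (cases z) (simp_all add: p_obs_eq_prob_potential_outcome[OF assms(5) indep])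
  then have p1: "p_obs M Z S1 S0 True = pi_U M S1 S0 True True + pi_U M S1 S0 True False"
    and p0: "p_obs M Z S1 S0 False = pi_U M S1 S0 True True + pi_U M S1 S0 False True"
    using prob_S1_eq_sum_pi_U[of S1 S0 True] prob_S0_eq_sum_pi_U[of S1 S0 True] by simp_all
  have "pi_U M S1 S0 False True = \<xi> * pi_U M S1 S0 True False"
    using assms(12,13) by (intro pi_U_ratio_if_cond_pi_U_ratio) simp_all
  from strata_identified[OF _ _ sum_pi_U_eq_1 p1 p0 this] show ?thesis
    using assms(9-11,14) by (simp add: Let_def pi_U_def)
qed

end
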